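(* Let a compilation chain be given, and let ${\sim}\subseteq \mathit{Trace}_S\times\mathit{Trace}_T$ and a Galois connection $\tau : (2^{\mathit{Trace}_S},\subseteq) \rightleftarrows (2^{\mathit{Trace}_T},\subseteq) : \sigma$ ($\tau$ lower adjoint) correspond to each other, in the sense that $s \sim t \iff t \in \tau(\{s\})$ for all $s,t$ (equivalently, $\tau$ and $\sigma$ are the existential and universal images of $\sim$). Then $\mathit{TP}^{\tau} \iff \mathit{CC}^{\sim} \iff \mathit{TP}^{\sigma}$, where $\mathit{TP}^{\tau} \equiv \forall \pi_S.\ \forall W.\ W \models \pi_S \Rightarrow W{\downarrow}\models \tau(\pi_S)$ and $\mathit{TP}^{\sigma}\equiv \forall \pi_T.\ \forall W.\ W\models\sigma(\pi_T) \Rightarrow W{\downarrow}\models \pi_T$.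
   Context: A compilation chain consists of a set of source (whole) programs $W$, a set of target programs, a set $\mathit{Trace}_S$ of source traces and a set $\mathit{Trace}_T$ of target traces, a source semantics relation $W \rightsquigarrow s$ (program $W$ can produce trace $s$), a target semantics relation of the same kind, and a compiler mapping each source program $W$ to a target program $W{\downarrow}$. A trace property is a set of traces; $W \models \pi$ iff every trace $W$ produces belongs to $\pi$. The existential image of $\sim$ is $\tilde\tau(\pi) = \{t \mid \exists s.\ s\sim t \wedge s\in\pi\}$ and its universal image is $\tilde\sigma(\pi)=\{s\mid \forall t.\ s\sim t\Rightarrow t\in\pi\}$. A Galois connection with lower adjoint $\tau$ means $\tau(\pi_S)\subseteq\pi_T \iff \pi_S\subseteq\sigma(\pi_T)$ for all $\pi_S,\pi_T$. The criterion $\mathit{CC}^{\sim}$ states: for every source program $W$ and every $t\in\mathit{Trace}_T$, if $W{\downarrow}\rightsquigarrow t$ then there exists $s$ with $s\sim t$ and $W\rightsquigarrow s$. *)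

theory Defs
  imports Main
begin

text \<open>A compilation chain is modelled by: source semantics semS (W produces s),
 target semantics semT, and a compiler cmp (W maps to its compiled version).\<close>

definition sat :: "('p \<Rightarrow> 'tr \<Rightarrow> bool) \<Rightarrow> 'p \<Rightarrow> 'tr set \<Rightarrow> bool" where
  "sat sem W \<pi> \<longleftrightarrow> (\<forall>t. sem W t \<longrightarrow> t \<in> \<pi>)"

definition galois_connection :: "('a set \<Rightarrow> 'b set) \<Rightarrow> ('b set \<Rightarrow> 'a set) \<Rightarrow> bool" where
  "galois_connection \<tau> \<sigma> \<longleftrightarrow> (\<forall>\<pi>S \<pi>T. \<tau> \<pi>S \<subseteq> \<pi>T \<longleftrightarrow> \<pi>S \<subseteq> \<sigma> \<pi>T)"

definition TP_tau :: "('w \<Rightarrow> 's \<Rightarrow> bool) \<Rightarrow> ('wt \<Rightarrow> 't \<Rightarrow> bool) \<Rightarrow> ('w \<Rightarrow> 'wt)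
    \<Rightarrow> ('s set \<Rightarrow> 't set) \<Rightarrow> bool" where
  "TP_tau semS semT cmp \<tau> \<longleftrightarrow>
     (\<forall>\<pi>S W. sat semS W \<pi>S \<longrightarrow> sat semT (cmp W) (\<tau> \<pi>S))"

definition TP_sigma :: "('w \<Rightarrow> 's \<Rightarrow> bool) \<Rightarrow> ('wt \<Rightarrow> 't \<Rightarrow> bool) \<Rightarrow> ('w \<Rightarrow> 'wt)
    \<Rightarrow> ('t set \<Rightarrow> 's set) \<Rightarrow> bool" where
  "TP_sigma semS semT cmp \<sigma> \<longleftrightarrow>
     (\<forall>\<pi>T W. sat semS W (\<sigma> \<pi>T) \<longrightarrow> sat semT (cmp W) \<pi>T)"

definition CC :: "('w \<Rightarrow> 's \<Rightarrow> bool) \<Rightarrow> ('wt \<Rightarrow> 't \<Rightarrow> bool) \<Rightarrow> ('w \<Rightarrow> 'wt)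
    \<Rightarrow> ('s \<Rightarrow> 't \<Rightarrow> bool) \<Rightarrow> bool" where
  "CC semS semT cmp rel \<longleftrightarrow>
     (\<forall>W t. semT (cmp W) t \<longrightarrow> (\<exists>s. rel s t \<and> semS W s))"

end

theory Submission
  imports Defs
begin

text \<open>A lower adjoint preserves unions, so \<open>\<tau>\<close> is determined by its values on singletons,
  i.e. by \<open>\<sim>\<close>; by adjunction so is \<open>\<sigma>\<close>. Hence \<open>\<tau>\<close> and \<open>\<sigma>\<close> are the existential and universal
  images of \<open>\<sim>\<close>. For these images, instantiating \<open>TP\<^sup>\<tau>\<close> with the strongest property of \<open>W\<close>
  (its own trace set), or \<open>TP\<^sup>\<sigma>\<close> with the set of targets related to some trace of \<open>W\<close>,
  yields \<open>CC\<^sup>\<sim>\<close>; the converse implications are immediate.\<close>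

definition existential_image :: "('s \<Rightarrow> 't \<Rightarrow> bool) \<Rightarrow> 's set \<Rightarrow> 't set" where
  "existential_image rel \<pi> = {t. \<exists>s\<in>\<pi>. rel s t}"

definition universal_image :: "('s \<Rightarrow> 't \<Rightarrow> bool) \<Rightarrow> 't set \<Rightarrow> 's set" where
  "universal_image rel \<pi> = {s. \<forall>t. rel s t \<longrightarrow> t \<in> \<pi>}"

lemma galois_connection_iff:
  "galois_connection \<tau> \<sigma> \<Longrightarrow> \<tau> \<pi> \<subseteq> \<pi>' \<longleftrightarrow> \<pi> \<subseteq> \<sigma> \<pi>'"
  by (simp add: galois_connection_def)

lemma galois_connection_upper_iff:
  assumes "galois_connection \<tau> \<sigma>"
  shows "s \<in> \<sigma> \<pi> \<longleftrightarrow> \<tau> {s} \<subseteq> \<pi>"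
  by (simp add: galois_connection_iff [OF assms])

lemma galois_connection_lower_mono:
  assumes "galois_connection \<tau> \<sigma>" and "\<pi> \<subseteq> \<pi>'"
  shows "\<tau> \<pi> \<subseteq> \<tau> \<pi>'"
proof -
  have "\<pi>' \<subseteq> \<sigma> (\<tau> \<pi>')"
    by (simp add: galois_connection_iff [OF assms(1), symmetric])
  with assms(2) show ?thesis
    by (simp add: galois_connection_iff [OF assms(1)])
qed

lemma galois_connection_lower_UN_singletons:
  assumes "galois_connection \<tau> \<sigma>"
  shows "\<tau> \<pi> = (\<Union>s\<in>\<pi>. \<tau> {s})"
proof
  have "\<pi> \<subseteq> \<sigma> (\<Union>s\<in>\<pi>. \<tau> {s})"
    by (auto simp add: galois_connection_upper_iff [OF assms])
  then show "\<tau> \<pi> \<subseteq> (\<Union>s\<in>\<pi>. \<tau> {s})"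
    by (simp add: galois_connection_iff [OF assms])
next
  show "(\<Union>s\<in>\<pi>. \<tau> {s}) \<subseteq> \<tau> \<pi>"
    using galois_connection_lower_mono [OF assms] by blast
qed

lemma galois_connection_lower_eq_existential_image:
  assumes "galois_connection \<tau> \<sigma>" and "\<And>s t. rel s t \<longleftrightarrow> t \<in> \<tau> {s}"
  shows "\<tau> = existential_image rel"
proof
  fix \<pi>
  have "\<tau> \<pi> = (\<Union>s\<in>\<pi>. \<tau> {s})"
    by (rule galois_connection_lower_UN_singletons [OF assms(1)])
  also have "\<dots> = existential_image rel \<pi>"
    by (auto simp add: assms(2) existential_image_def)
  finally show "\<tau> \<pi> = existential_image rel \<pi>" .
qed

lemma galois_connection_upper_eq_universal_image:
  assumes "galois_connection \<tau> \<sigma>" and "\<And>s t. rel s t \<longleftrightarrow> t \<in> \<tau> {s}"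
  shows "\<sigma> = universal_image rel"
proof
  fix \<pi>
  show "\<sigma> \<pi> = universal_image rel \<pi>"
    by (auto simp add: galois_connection_upper_iff [OF assms(1)] assms(2) universal_image_def)
qed

lemma TP_tau_existential_image_iff_CC:
  "TP_tau semS semT cmp (existential_image rel) \<longleftrightarrow> CC semS semT cmp rel"
proof
  assume TP: "TP_tau semS semT cmp (existential_image rel)"
  show "CC semS semT cmp rel"
    unfolding CC_def
  proof (intro allI impI)
    fix W t
    assume "semT (cmp W) t"
    moreover have "sat semS W {s. semS W s}"
      by (simp add: sat_def)
    ultimately show "\<exists>s. rel s t \<and> semS W s"
      using TP unfolding TP_tau_def sat_def existential_image_def by blast
  qed
next
  assume "CC semS semT cmp rel"
  then show "TP_tau semS semT cmp (existential_image rel)"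
    unfolding CC_def TP_tau_def sat_def existential_image_def by blast
qed

lemma CC_iff_TP_sigma_universal_image:
  "CC semS semT cmp rel \<longleftrightarrow> TP_sigma semS semT cmp (universal_image rel)"
proof
  assume "CC semS semT cmp rel"
  then show "TP_sigma semS semT cmp (universal_image rel)"
    unfolding CC_def TP_sigma_def sat_def universal_image_def by blast
next
  assume TP: "TP_sigma semS semT cmp (universal_image rel)"
  show "CC semS semT cmp rel"
    unfolding CC_def
  proof (intro allI impI)
    fix W t
    assume "semT (cmp W) t"
    moreover have "sat semS W (universal_image rel {t. \<exists>s. rel s t \<and> semS W s})"
      by (auto simp add: sat_def universal_image_def)
    ultimately show "\<exists>s. rel s t \<and> semS W s"
      using TP unfolding TP_sigma_def sat_def by blast
  qed
qed

theorem theorem2p8: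
  fixes semS :: "'w \<Rightarrow> 's \<Rightarrow> bool" and semT :: "'wt \<Rightarrow> 't \<Rightarrow> bool"
    and cmp :: "'w \<Rightarrow> 'wt" and rel :: "'s \<Rightarrow> 't \<Rightarrow> bool"
    and \<tau> :: "'s set \<Rightarrow> 't set" and \<sigma> :: "'t set \<Rightarrow> 's set"
  assumes "galois_connection \<tau> \<sigma>"
    and "\<forall>s t. rel s t \<longleftrightarrow> t \<in> \<tau> {s}"
  shows "(TP_tau semS semT cmp \<tau> \<longleftrightarrow> CC semS semT cmp rel)
       \<and> (CC semS semT cmp rel \<longleftrightarrow> TP_sigma semS semT cmp \<sigma>)"
proof -
  have "\<tau> = existential_image rel" and "\<sigma> = universal_image rel"
    using galois_connection_lower_eq_existential_image [OF assms(1)]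
      galois_connection_upper_eq_universal_image [OF assms(1)] assms(2) by blast+
  then show ?thesis
    by (simp only: TP_tau_existential_image_iff_CC CC_iff_TP_sigma_universal_image)
qed

end
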